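(* For every integer $n>2$, the number of pairs $(s,t)\in S_n\times S_n$ such that $[s,t]=sts^{-1}t^{-1}$ is a $3$-cycle and $s$ is an $n$-cycle equals $\binom{n}{3}\, n!$.
   Context: $S_n$ is the symmetric group on $\{1,\dots,n\}$; permutations compose as functions. *)

theory Defs
  imports "HOL-Combinatorics.Combinatorics"
begin

definition is_k_cycle :: "nat \<Rightarrow> (nat \<Rightarrow> nat) \<Rightarrow> bool" where
  "is_k_cycle k p \<longleftrightarrow> (\<exists>xs. distinct xs \<and> length xs = k \<and> p = cycle_of_list xs)"

definition commutator :: "(nat \<Rightarrow> nat) \<Rightarrow> (nat \<Rightarrow> nat) \<Rightarrow> (nat \<Rightarrow> nat)" where
  "commutator s t = s \<circ> t \<circ> inv s \<circ> inv t"

end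

theory Submission
  imports Defs
begin

(* Write s = (x_1 ... x_n).  Since [s, t] = s (t s t^-1)^-1 and t s t^-1 is the cycle of the
   relabelled list (t x_1 ... t x_n), the condition only concerns the n-cycle u = t s t^-1.
   The core fact is that for an n-cycle s there are exactly C(n, 3) n-cycles u with s u^-1 a
   3-cycle: u = c s for a 3-cycle c, and for every 3-element subset of {1..n} exactly one of
   the two 3-cycles c on it makes c s an n-cycle (the one whose orientation agrees with s).
   Each n-cycle u is t s t^-1 for exactly n permutations t (t is fixed by the arrangement
   (t x_1 ... t x_n), and u has n arrangements), so each n-cycle s has n * C(n, 3) partners
   t, and there are (n - 1)! choices of s. *)

lemma cycle_of_list_3:
  assumes "distinct [a,b,d]"
  shows "cycle_of_list [a,b,d] = (\<lambda>x. if x=a then b else if x=b then d else if x=d then a else x)"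
  using assms by (auto simp: fun_eq_iff Transposition.transpose_def)

lemma cycle_of_list_3_rotate:
  assumes "distinct [a,b,d]"
  shows "cycle_of_list [a,b,d] = cycle_of_list [b,d,a]"
proof -
  have "distinct [b,d,a]" using assms by auto
  then show ?thesis
    unfolding cycle_of_list_3[OF assms] cycle_of_list_3[of b d a] using assms by (auto simp: fun_eq_iff)
qed

lemma cycle_of_list_3_inv:
  assumes "distinct [a,b,d]"
  shows "inv (cycle_of_list [a,b,d]) = cycle_of_list [a,d,b]"
proof (rule inv_unique_comp)
  have adb: "distinct [a,d,b]" using assms by auto
  show "cycle_of_list [a,b,d] \<circ> cycle_of_list [a,d,b] = id"
       "cycle_of_list [a,d,b] \<circ> cycle_of_list [a,b,d] = id"
    unfolding cycle_of_list_3[OF assms] cycle_of_list_3[OF adb] using assms by (auto simp: fun_eq_iff)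
qed

lemma cycle_of_list_3_support:
  assumes "distinct [a,b,d]"
  shows "{x. cycle_of_list [a,b,d] x \<noteq> x} = {a,b,d}"
  unfolding cycle_of_list_3[OF assms] using assms by auto

lemma three_cycle_of_list: "distinct [a,b,d] \<Longrightarrow> is_k_cycle 3 (cycle_of_list [a,b,d])"
  unfolding is_k_cycle_def by (intro exI[of _ "[a,b,d]"]) simp

lemma three_cycle_by_support:
  assumes "is_k_cycle 3 c" "{x. c x \<noteq> x} = {a,b,d}" "distinct [a,b,d]"
  shows "c = cycle_of_list [a,b,d] \<or> c = cycle_of_list [a,d,b]"
proof -
  obtain p q r where pqr: "distinct [p,q,r]" "c = cycle_of_list [p,q,r]"
    using assms(1) unfolding is_k_cycle_def by (auto simp: numeral_3_eq_3 length_Suc_conv)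
  have support: "{p,q,r} = {a,b,d}" using assms(2) cycle_of_list_3_support[OF pqr(1)] pqr(2) by simp
  obtain y z where yz: "distinct [a,y,z]" "c = cycle_of_list [a,y,z]" "{a,y,z} = {a,b,d}"
  proof -
    have qrp: "distinct [q,r,p]" and rpq: "distinct [r,p,q]" using pqr(1) by auto
    have "a = p \<or> a = q \<or> a = r" using support by blast
    then show thesis
    proof (elim disjE)
      assume "a = p" then show thesis using that pqr support by blast
    next
      assume "a = q" then show thesis
        using that[of r p] qrp pqr(2) support cycle_of_list_3_rotate[OF pqr(1)]
        by (auto simp del: cycle_of_list.simps)
    next
      assume "a = r" then show thesis
        using that[of p q] rpq pqr(2) support cycle_of_list_3_rotate[OF qrp] cycle_of_list_3_rotate[OF pqr(1)]
        by (auto simp del: cycle_of_list.simps)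
    qed
  qed
  have "{y,z} = {b,d}" using yz(1,3) assms(3) by auto
  then show ?thesis using yz(2) by (auto simp: doubleton_eq_iff)
qed

lemma three_cycle_inv:
  assumes "distinct [a,b,d]" "c = cycle_of_list [a,b,d] \<or> c = cycle_of_list [a,d,b]"
  shows "is_k_cycle 3 (inv c)" "{x. inv c x \<noteq> x} = {a,b,d}"
proof -
  have adb: "distinct [a,d,b]" using assms(1) by auto
  have "inv c = cycle_of_list [a,d,b] \<or> inv c = cycle_of_list [a,b,d]"
    using assms(2) cycle_of_list_3_inv[OF assms(1)] cycle_of_list_3_inv[OF adb] by auto
  then show "is_k_cycle 3 (inv c)" "{x. inv c x \<noteq> x} = {a,b,d}"
    using cycle_of_list_3_support[OF assms(1)] cycle_of_list_3_support[OF adb]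
      three_cycle_of_list[OF assms(1)] three_cycle_of_list[OF adb] by (metis insert_commute)+
qed

lemma cycle_of_list_funpow_nth:
  assumes "distinct xs" "m < length xs"
  shows "(cycle_of_list xs ^^ k) (xs!m) = xs!((k + m) mod length xs)"
proof -
  have "(cycle_of_list xs ^^ k) (xs!m) = rotate k xs ! m"
    using cyclic_rotation[OF assms(1), of k] assms(2) by (metis nth_map)
  then show ?thesis using nth_rotate[OF assms(2)] by simp
qed

lemma cycle_of_list_nth:
  assumes "distinct xs" "m < length xs"
  shows "cycle_of_list xs (xs!m) = xs!(Suc m mod length xs)"
  using cycle_of_list_funpow_nth[OF assms, of 1] by simp

lemma cycle_of_list_eqI:
  assumes "distinct ys" "p permutes set ys"
    and "\<And>m. m < length ys \<Longrightarrow> p (ys!m) = ys!(Suc m mod length ys)"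
  shows "p = cycle_of_list ys"
proof
  fix x show "p x = cycle_of_list ys x"
  proof (cases "x \<in> set ys")
    case True
    then obtain m where "m < length ys" "x = ys!m" by (auto simp: in_set_conv_nth)
    then show ?thesis using assms(3) cycle_of_list_nth[OF assms(1)] by simp
  next
    case False
    then show ?thesis using assms(2) id_outside_supp by (metis permutes_not_in)
  qed
qed

lemma cycle_of_list_moves:
  assumes "distinct xs" "length xs \<ge> 2" "x \<in> set xs"
  shows "cycle_of_list xs x \<noteq> x"
proof -
  obtain m where m: "m < length xs" "x = xs!m" using assms(3) by (auto simp: in_set_conv_nth)
  have "Suc m mod length xs \<noteq> m"
  proof (cases "Suc m < length xs")
    case False
    then have "Suc m = length xs" using m(1) by simp
    then show ?thesis using assms(2) by simp
  qed simp
  moreover have "Suc m mod length xs < length xs" using m(1) by (intro mod_less_divisor) auto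
  ultimately show ?thesis
    using m cycle_of_list_nth[OF assms(1) m(1)] nth_eq_iff_index_eq[OF assms(1)] by metis
qed

lemma full_cycle_list:
  assumes "is_k_cycle (card S) q" "q permutes S" "finite S" "card S \<ge> 2"
  obtains zs where "distinct zs" "set zs = S" "q = cycle_of_list zs"
proof -
  obtain zs where zs: "distinct zs" "length zs = card S" "q = cycle_of_list zs"
    using assms(1) unfolding is_k_cycle_def by blast
  have "set zs \<subseteq> S"
    using cycle_of_list_moves[OF zs(1)] zs(2,3) assms(2,4) by (metis permutes_not_in subsetI)
  moreover have "card (set zs) = card S" using zs by (simp add: distinct_card)
  ultimately have "set zs = S" using assms(3) by (simp add: card_subset_eq)
  then show ?thesis using that zs by blast
qed

lemma full_cycle_no_short_orbit:
  assumes "distinct zs" "length zs = n" "x \<in> set zs" "0 < j" "j < n"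
  shows "(cycle_of_list zs ^^ j) x \<noteq> x"
proof -
  obtain r where r: "r < n" "x = zs!r" using assms(2,3) by (auto simp: in_set_conv_nth)
  have "(j + r) mod n \<noteq> r"
  proof (cases "j + r < n")
    case False
    then have "(j + r) mod n = j + r - n" using assms r by (simp add: le_mod_geq)
    then show ?thesis using assms False by auto
  qed (use assms in simp)
  moreover have "(j + r) mod n < n" using assms by simp
  ultimately show ?thesis
    using cycle_of_list_funpow_nth[OF assms(1), of r j] nth_eq_iff_index_eq[OF assms(1)] r assms(2)
    by simp
qed

(* Key computation, one orientation: for s = (x_0 ... x_(n-1)) and 0 < j < k < n, the product
   (x_0 x_j x_k) s is again an n-cycle, namely
   (x_0 ... x_(j-1) x_k ... x_(n-1) x_j ... x_(k-1)). *)
lemma three_cycle_times_full_cycle: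
  assumes xs: "distinct xs" "length xs = n" and jk: "0 < j" "j < k" "k < n"
  shows "is_k_cycle n (cycle_of_list [xs!0, xs!j, xs!k] \<circ> cycle_of_list xs)"
proof -
  have idx_eq: "a < n \<Longrightarrow> b < n \<Longrightarrow> (xs!a = xs!b) = (a = b)" for a b
    using nth_eq_iff_index_eq[OF xs(1)] xs(2) by simp
  define c where "c = cycle_of_list [xs!0, xs!j, xs!k]"
  define q where "q = c \<circ> cycle_of_list xs"
  \<comment> \<open>the orbit of q visits the positions 0..j-1, then k..n-1, then j..k-1\<close>
  define g where "g m = (if m < j then m else if m < j + (n-k) then m + k - j else m - (n-k))" for m
  define ys where "ys = map (\<lambda>m. xs!(g m)) [0..<n]"
  have g_lt: "m < n \<Longrightarrow> g m < n" for m using jk unfolding g_def by auto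
  have "inj_on g {0..<n}" using jk unfolding g_def inj_on_def by (auto split: if_splits)
  then have ys_distinct: "distinct ys"
    unfolding ys_def distinct_map using g_lt idx_eq by (auto simp: inj_on_def)
  have ys_length: "length ys = n" unfolding ys_def by simp
  have "set ys \<subseteq> set xs" unfolding ys_def using g_lt xs(2) by auto
  moreover have "card (set ys) = card (set xs)" using ys_distinct xs ys_length by (simp add: distinct_card)
  ultimately have ys_set: "set ys = set xs" by (simp add: card_subset_eq)
  have c3: "distinct [xs!0, xs!j, xs!k]" using jk idx_eq by auto
  have c_eq: "c = (\<lambda>x. if x=xs!0 then xs!j else if x=xs!j then xs!k else if x=xs!k then xs!0 else x)"
    unfolding c_def using cycle_of_list_3[OF c3] .
  have "set [xs!0, xs!j, xs!k] \<subseteq> set xs" using jk xs(2) by auto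
  then have q_permutes: "q permutes set xs" unfolding q_def c_def
    by (meson cycle_permutes permutes_compose permutes_subset)
  have q_step: "q (ys!m) = ys!(Suc m mod n)" if m: "m < n" for m
  proof -
    have "q (ys!m) = c (xs!(Suc (g m) mod n))"
      unfolding q_def ys_def using m cycle_of_list_nth[OF xs(1)] g_lt[OF m] xs(2) by simp
    also have "\<dots> = xs!(g (Suc m mod n))"
    proof -
      consider "Suc m < j" | "Suc m = j" | "j \<le> m" "Suc m < j + (n-k)" | "j \<le> m" "Suc m = j + (n-k)"
        | "j + (n-k) \<le> m" "Suc m < n" | "Suc m = n" using m jk by linarith
      then show ?thesis
      proof cases
        case 4
        then have "Suc (g m) = n" "g (Suc m mod n) = j" using jk by (simp_all add: g_def)
        then show ?thesis unfolding c_eq using jk by (auto simp: idx_eq)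
      qed (use jk m in \<open>auto simp: c_eq g_def idx_eq\<close>)
    qed
    also have "\<dots> = ys!(Suc m mod n)" unfolding ys_def using m jk by simp
    finally show ?thesis .
  qed
  have "q = cycle_of_list ys"
    by (rule cycle_of_list_eqI[OF ys_distinct]) (use q_permutes ys_set q_step ys_length in auto)
  then show ?thesis unfolding is_k_cycle_def q_def c_def using ys_distinct ys_length by blast
qed

(* Key computation, other orientation: (x_0 x_k x_j) s is not an n-cycle, because
   x_0 -> x_1 -> ... -> x_(j-1) -> x_0 is an orbit of length j < n. *)
lemma reversed_three_cycle_times_full_cycle:
  assumes xs: "distinct xs" "length xs = n" and jk: "0 < j" "j < k" "k < n"
  shows "\<not> is_k_cycle n (cycle_of_list [xs!0, xs!k, xs!j] \<circ> cycle_of_list xs)"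
proof
  have idx_eq: "a < n \<Longrightarrow> b < n \<Longrightarrow> (xs!a = xs!b) = (a = b)" for a b
    using nth_eq_iff_index_eq[OF xs(1)] xs(2) by simp
  define c where "c = cycle_of_list [xs!0, xs!k, xs!j]"
  define q where "q = c \<circ> cycle_of_list xs"
  have c3: "distinct [xs!0, xs!k, xs!j]" using jk idx_eq by auto
  have c_eq: "c = (\<lambda>x. if x=xs!0 then xs!k else if x=xs!k then xs!j else if x=xs!j then xs!0 else x)"
    unfolding c_def using cycle_of_list_3[OF c3] .
  have s_nth: "a < n \<Longrightarrow> cycle_of_list xs (xs!a) = xs!(Suc a mod n)" for a
    using cycle_of_list_nth[OF xs(1)] xs(2) by simp
  have orbit: "m < j \<Longrightarrow> (q^^m) (xs!0) = xs!m" for m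
  proof (induction m)
    case (Suc m)
    then show ?case unfolding q_def using jk s_nth[of m] by (simp add: c_eq idx_eq)
  qed simp
  have "(q^^j) (xs!0) = q ((q^^(j-1)) (xs!0))" using jk by (metis Suc_pred' funpow.simps(2) o_apply)
  also have "\<dots> = q (xs!(j-1))" using jk orbit[of "j-1"] by simp
  also have "\<dots> = xs!0" unfolding q_def using jk s_nth[of "j-1"] by (simp add: c_eq idx_eq)
  finally have fixed: "(q^^j) (xs!0) = xs!0" .
  have "set [xs!0, xs!k, xs!j] \<subseteq> set xs" using jk xs(2) by auto
  then have "q permutes set xs" unfolding q_def c_def
    by (meson cycle_permutes permutes_compose permutes_subset)
  moreover assume "is_k_cycle n (c \<circ> cycle_of_list xs)"
  moreover have "card (set xs) = n" using xs by (simp add: distinct_card)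
  ultimately obtain zs where zs: "distinct zs" "set zs = set xs" "q = cycle_of_list zs"
    using full_cycle_list[of "set xs" q] jk unfolding q_def by auto
  have "length zs = n" using zs(1,2) xs by (metis distinct_card)
  moreover have "xs!0 \<in> set zs" using zs(2) xs(2) jk by simp
  ultimately show False using full_cycle_no_short_orbit[OF zs(1)] fixed zs(3) jk by auto
qed

(* Rotating the list of s so that it
   starts at a reduces this to the two lemmas above. *)
lemma exactly_one_orientation:
  assumes xs: "distinct xs" "length xs = n" and abd: "distinct [a,b,d]" "{a,b,d} \<subseteq> set xs"
  shows "is_k_cycle n (cycle_of_list [a,b,d] \<circ> cycle_of_list xs) \<longleftrightarrow>
         \<not> is_k_cycle n (cycle_of_list [a,d,b] \<circ> cycle_of_list xs)"
proof -
  obtain r where r: "r < n" "xs!r = a" using abd(2) xs(2) by (auto simp: in_set_conv_nth)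
  define ys where "ys = rotate r xs"
  have ys: "distinct ys" "length ys = n" "set ys = set xs" "ys!0 = a"
    and same_cycle: "cycle_of_list ys = cycle_of_list xs"
    using xs r nth_rotate[of 0 xs r] cycle_of_list_rotate_independent[OF xs(1)]
    unfolding ys_def by auto
  have "b \<in> set ys" "d \<in> set ys" using abd(2) ys(3) by auto
  then obtain \<beta> \<delta> where \<beta>\<delta>: "\<beta> < n" "ys!\<beta> = b" "\<delta> < n" "ys!\<delta> = d"
    using ys(2) by (metis in_set_conv_nth)
  have "b \<noteq> a" "d \<noteq> a" "b \<noteq> d" using abd(1) by auto
  then have "\<beta> \<noteq> 0" "\<delta> \<noteq> 0" "\<beta> \<noteq> \<delta>" using ys(4) \<beta>\<delta> by metis+
  then consider "0 < \<beta>" "\<beta> < \<delta>" | "0 < \<delta>" "\<delta> < \<beta>" by linarith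
  then show ?thesis
  proof cases
    case 1
    then show ?thesis using three_cycle_times_full_cycle[OF ys(1,2) 1 \<beta>\<delta>(3)]
        reversed_three_cycle_times_full_cycle[OF ys(1,2) 1 \<beta>\<delta>(3)] ys(4) \<beta>\<delta> same_cycle by simp
  next
    case 2
    then show ?thesis using three_cycle_times_full_cycle[OF ys(1,2) 2 \<beta>\<delta>(1)]
        reversed_three_cycle_times_full_cycle[OF ys(1,2) 2 \<beta>\<delta>(1)] ys(4) \<beta>\<delta> same_cycle by simp
  qed
qed

lemma right_quotient_comp:
  assumes "bij c" "bij s"
  shows "s \<circ> inv (c \<circ> s) = inv c"
proof -
  have "s \<circ> inv s = id" using bij_is_surj[OF assms(2)] surj_iff by blast
  then show ?thesis using assms by (simp add: o_inv_distrib comp_assoc[symmetric])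
qed

lemma factor_by_right_quotient:
  assumes "bij s" "bij u"
  shows "u = inv (s \<circ> inv u) \<circ> s"
  using assms by (simp add: o_inv_distrib bij_imp_bij_inv inv_inv_eq comp_assoc bij_is_inj)

lemma three_cycle_within:
  assumes "is_k_cycle 3 c" "c permutes S"
  obtains a b d where "distinct [a,b,d]" "{a,b,d} \<subseteq> S" "c = cycle_of_list [a,b,d]"
proof -
  obtain cs where cs: "distinct cs" "length cs = 3" "c = cycle_of_list cs"
    using assms(1) unfolding is_k_cycle_def by blast
  then obtain a b d where abd: "cs = [a,b,d]" by (auto simp: numeral_3_eq_3 length_Suc_conv)
  have "{a,b,d} \<subseteq> S"
    using cycle_of_list_3_support[of a b d] cs abd assms(2) by (auto dest: permutes_not_in)
  then show ?thesis using that cs abd by blast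
qed

(* Uniqueness half of the count below: an n-cycle u with s u^-1 a 3-cycle is determined by the
   support of s u^-1, since the other 3-cycle on the same support has the wrong orientation. *)
lemma three_cycle_quotient_unique:
  assumes xs: "distinct xs" "length xs = n"
    and u: "u permutes set xs" "is_k_cycle n u" "is_k_cycle 3 (cycle_of_list xs \<circ> inv u)"
    and u': "u' permutes set xs" "is_k_cycle n u'" "is_k_cycle 3 (cycle_of_list xs \<circ> inv u')"
    and same: "{x. (cycle_of_list xs \<circ> inv u) x \<noteq> x} = {x. (cycle_of_list xs \<circ> inv u') x \<noteq> x}"
  shows "u = u'"
proof -
  define s where "s = cycle_of_list xs"
  have s_bij: "bij s" unfolding s_def by (rule permutation_bijective[OF permutation_of_cycle])
  have u_bij: "bij u" "bij u'" using u(1) u'(1) by (simp_all add: permutes_bij)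
  have "s \<circ> inv u permutes set xs"
    unfolding s_def using u(1) by (simp add: cycle_permutes permutes_compose permutes_inv)
  then obtain a b d where abd: "distinct [a,b,d]" "{a,b,d} \<subseteq> set xs" "s \<circ> inv u = cycle_of_list [a,b,d]"
    using three_cycle_within u(3) unfolding s_def by blast
  have "{x. (s \<circ> inv u') x \<noteq> x} = {a,b,d}"
    using same abd(3) cycle_of_list_3_support[OF abd(1)] unfolding s_def by simp
  then consider "s \<circ> inv u' = cycle_of_list [a,b,d]" | "s \<circ> inv u' = cycle_of_list [a,d,b]"
    using three_cycle_by_support u'(3) abd(1) unfolding s_def by blast
  then show "u = u'"
  proof cases
    case 1
    then show ?thesis using abd(3) factor_by_right_quotient[OF s_bij] u_bij by metis
  next
    case 2
    have adb: "distinct [a,d,b]" using abd(1) by auto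
    have "u = cycle_of_list [a,d,b] \<circ> s" "u' = cycle_of_list [a,b,d] \<circ> s"
      using factor_by_right_quotient[OF s_bij u_bij(1)] factor_by_right_quotient[OF s_bij u_bij(2)]
        abd(3) 2 cycle_of_list_3_inv[OF abd(1)] cycle_of_list_3_inv[OF adb] by simp_all
    then show ?thesis using exactly_one_orientation[OF xs abd(1,2)] u(2) u'(2) unfolding s_def by simp
  qed
qed

(* Existence half: every 3-element subset M of set xs is the support of s u^-1 for some n-cycle u,
   namely u = c s for the orientation c on M that makes c s an n-cycle. *)
lemma three_cycle_quotient_exists:
  assumes xs: "distinct xs" "length xs = n" and M: "M \<subseteq> set xs" "card M = 3"
  obtains u where "u permutes set xs" "is_k_cycle n u" "is_k_cycle 3 (cycle_of_list xs \<circ> inv u)"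
    "{x. (cycle_of_list xs \<circ> inv u) x \<noteq> x} = M"
proof -
  define s where "s = cycle_of_list xs"
  have s_perm: "s permutes set xs" and s_bij: "bij s"
    unfolding s_def by (rule cycle_permutes, rule permutation_bijective[OF permutation_of_cycle])
  obtain a b d where abd: "distinct [a,b,d]" "M = {a,b,d}" using M(2) by (auto simp: card_3_iff)
  obtain c where c: "c = cycle_of_list [a,b,d] \<or> c = cycle_of_list [a,d,b]" "is_k_cycle n (c \<circ> s)"
    using exactly_one_orientation[OF xs abd(1)] M abd(2) unfolding s_def by blast
  have c_bij: "bij c" using c(1) by (metis permutation_bijective permutation_of_cycle)
  have "set [a,b,d] \<subseteq> set xs" "set [a,d,b] \<subseteq> set xs" using M abd(2) by auto
  then have "c permutes set xs" using c(1) by (metis cycle_permutes permutes_subset)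
  then have "c \<circ> s permutes set xs" using s_perm by (simp add: permutes_compose)
  moreover have quot: "s \<circ> inv (c \<circ> s) = inv c" by (rule right_quotient_comp[OF c_bij s_bij])
  ultimately show ?thesis
  proof (intro that[of "c \<circ> s"])
    show "is_k_cycle 3 (cycle_of_list xs \<circ> inv (c \<circ> s))"
      using three_cycle_inv(1)[OF abd(1) c(1)] quot unfolding s_def by simp
    show "{x. (cycle_of_list xs \<circ> inv (c \<circ> s)) x \<noteq> x} = M"
      using three_cycle_inv(2)[OF abd(1) c(1)] quot abd(2) unfolding s_def by simp
  qed (use c(2) in simp_all)
qed

(* Counting lemma for a fixed n-cycle s = cycle_of_list xs: the n-cycles u on set xs for which
   s u^-1 is a 3-cycle correspond, via the support of s u^-1, to the 3-element subsets of set xs. *)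
lemma card_three_cycle_quotients:
  assumes xs: "distinct xs" "length xs = n"
  shows "card {u. u permutes set xs \<and> is_k_cycle n u \<and> is_k_cycle 3 (cycle_of_list xs \<circ> inv u)}
         = n choose 3"
proof -
  define s where "s = cycle_of_list xs"
  define U where "U = {u. u permutes set xs \<and> is_k_cycle n u \<and> is_k_cycle 3 (s \<circ> inv u)}"
  define supp where "supp u = {x. (s \<circ> inv u) x \<noteq> x}" for u
  have s_perm: "s permutes set xs" unfolding s_def by (rule cycle_permutes)
  have quot_perm: "s \<circ> inv u permutes set xs" if "u \<in> U" for u
    using that s_perm unfolding U_def by (simp add: permutes_compose permutes_inv)
  have "inj_on supp U"
  proof (rule inj_onI)
    fix u u' assume "u \<in> U" "u' \<in> U" "supp u = supp u'"
    then show "u = u'"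
      using three_cycle_quotient_unique[OF xs, of u u'] unfolding U_def supp_def s_def by simp
  qed
  moreover have "supp ` U = {M. M \<subseteq> set xs \<and> card M = 3}"
  proof
    show "supp ` U \<subseteq> {M. M \<subseteq> set xs \<and> card M = 3}"
    proof clarify
      fix u assume u: "u \<in> U"
      then obtain a b d where abd: "distinct [a,b,d]" "{a,b,d} \<subseteq> set xs"
        "s \<circ> inv u = cycle_of_list [a,b,d]"
        using three_cycle_within quot_perm[OF u] unfolding U_def by blast
      then have "supp u = {a,b,d}" unfolding supp_def using cycle_of_list_3_support[OF abd(1)] by simp
      then show "supp u \<subseteq> set xs \<and> card (supp u) = 3" using abd(1,2) by simp
    qed
    show "{M. M \<subseteq> set xs \<and> card M = 3} \<subseteq> supp ` U"
      using three_cycle_quotient_exists[OF xs] unfolding U_def supp_def s_def by blast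
  qed
  ultimately have "card U = card {M. M \<subseteq> set xs \<and> card M = 3}" by (metis card_image)
  also have "\<dots> = n choose 3" using n_subsets[of "set xs" 3] xs by (simp add: distinct_card)
  finally show ?thesis unfolding U_def s_def .
qed

lemma commutator_cycle_of_list:
  assumes "distinct xs" "bij t"
  shows "commutator (cycle_of_list xs) t = cycle_of_list xs \<circ> inv (cycle_of_list (map t xs))"
proof -
  let ?s = "cycle_of_list xs"
  have s_bij: "bij ?s" by (rule permutation_bijective[OF permutation_of_cycle])
  have "cycle_of_list (map t xs) = t \<circ> ?s \<circ> inv t" by (rule conjugation_of_cycle[OF assms, symmetric])
  then have "inv (cycle_of_list (map t xs)) = t \<circ> inv ?s \<circ> inv t"
    using assms(2) s_bij by (simp add: o_inv_distrib bij_imp_bij_inv bij_comp inv_inv_eq comp_assoc)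
  then show ?thesis unfolding commutator_def by (simp add: comp_assoc)
qed

lemma bij_betw_card_filter:
  assumes "bij_betw f A B"
  shows "card {a \<in> A. P (f a)} = card {b \<in> B. P b}"
proof -
  have image: "f ` {a \<in> A. P (f a)} = {b \<in> B. P b}"
    using assms unfolding bij_betw_def by blast
  then have "bij_betw f {a \<in> A. P (f a)} {b \<in> B. P b}"
    using bij_betw_subset[OF assms _ image] by blast
  then show ?thesis by (rule bij_betw_same_card)
qed

definition full_cycles :: "nat set \<Rightarrow> (nat \<Rightarrow> nat) set" where
  "full_cycles N = {s. s permutes N \<and> is_k_cycle (card N) s}"

lemma finite_full_cycles: "finite N \<Longrightarrow> finite (full_cycles N)"
  unfolding full_cycles_def by (rule finite_subset[OF _ finite_permutations]) auto

lemma arrangement_full_cycle: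
  assumes "xs \<in> permutations_of_set N"
  shows "cycle_of_list xs \<in> full_cycles N"
proof -
  have "distinct xs" "set xs = N" using assms by (auto dest: permutations_of_setD)
  then show ?thesis unfolding full_cycles_def is_k_cycle_def
    using cycle_permutes[of xs] by (auto simp: distinct_card)
qed

(* Each full cycle on N arises from exactly |N| arrangements of N: its rotations. *)
lemma card_arrangements_of_full_cycle:
  assumes N: "finite N" "card N \<ge> 2" and s: "s \<in> full_cycles N"
  shows "card {xs \<in> permutations_of_set N. cycle_of_list xs = s} = card N"
proof -
  define n where "n = card N"
  obtain zs where zs: "distinct zs" "set zs = N" "s = cycle_of_list zs"
    using full_cycle_list[of N s] s N unfolding full_cycles_def by auto
  have zs_length: "length zs = n" unfolding n_def using zs(1,2) by (metis distinct_card)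
  have "{xs \<in> permutations_of_set N. cycle_of_list xs = s} = (\<lambda>k. rotate k zs) ` {..<n}"
  proof (rule set_eqI, rule iffI)
    fix ys assume "ys \<in> {xs \<in> permutations_of_set N. cycle_of_list xs = s}"
    then have ys: "distinct ys" "set ys = N" "cycle_of_list ys = cycle_of_list zs"
      using zs by (auto dest: permutations_of_setD)
    then have ys_length: "length ys = n" unfolding n_def by (metis distinct_card)
    have "0 < length ys" using ys_length N(2) unfolding n_def by simp
    then have "ys!0 \<in> N" using ys(2) nth_mem by blast
    then obtain k where k: "k < n" "ys!0 = zs!k" using zs(2) zs_length by (metis in_set_conv_nth)
    \<comment> \<open>both lists are traversed by the same cycle, starting from the same point\<close>
    have "ys = rotate k zs"
    proof (rule nth_equalityI)
      show "length ys = length (rotate k zs)" using ys_length zs_length by simp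
      fix m assume "m < length ys"
      then have m: "m < n" using ys_length by simp
      have "ys!m = (cycle_of_list ys ^^ m) (ys!0)"
        using cycle_of_list_funpow_nth[OF ys(1), of 0 m] ys_length m by simp
      also have "\<dots> = (cycle_of_list zs ^^ m) (zs!k)" using ys(3) k by simp
      also have "\<dots> = zs!((m + k) mod n)" using cycle_of_list_funpow_nth[OF zs(1), of k m] zs_length k by simp
      also have "\<dots> = rotate k zs ! m" using nth_rotate[of m zs k] zs_length m by (simp add: add.commute)
      finally show "ys!m = rotate k zs ! m" .
    qed
    then show "ys \<in> (\<lambda>k. rotate k zs) ` {..<n}" using k by blast
  next
    fix ys assume "ys \<in> (\<lambda>k. rotate k zs) ` {..<n}"
    then obtain k where "ys = rotate k zs" by auto
    then show "ys \<in> {xs \<in> permutations_of_set N. cycle_of_list xs = s}"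
      using zs cycle_of_list_rotate_independent[OF zs(1), of k] by (auto intro: permutations_of_setI)
  qed
  moreover have "inj_on (\<lambda>k. rotate k zs) {..<n}"
  proof (rule inj_onI)
    fix k k' assume "k \<in> {..<n}" "k' \<in> {..<n}" "rotate k zs = rotate k' zs"
    then have "k < n" "k' < n" "zs!k = zs!k'"
      using nth_rotate[of 0 zs k] nth_rotate[of 0 zs k'] zs_length N(2) unfolding n_def by auto
    then show "k = k'" using nth_eq_iff_index_eq[OF zs(1)] zs_length by simp
  qed
  ultimately show ?thesis unfolding n_def by (simp add: card_image)
qed

lemma card_arrangements_of_full_cycles:
  assumes N: "finite N" "card N \<ge> 2" and X: "X \<subseteq> full_cycles N"
  shows "card {xs \<in> permutations_of_set N. cycle_of_list xs \<in> X} = card N * card X"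
proof -
  have "{xs \<in> permutations_of_set N. cycle_of_list xs \<in> X}
        = (\<Union>s\<in>X. {xs \<in> permutations_of_set N. cycle_of_list xs = s})" by blast
  also have "card \<dots> = (\<Sum>s\<in>X. card {xs \<in> permutations_of_set N. cycle_of_list xs = s})"
    using finite_subset[OF X finite_full_cycles[OF N(1)]] by (intro card_UN_disjoint) auto
  also have "\<dots> = (\<Sum>s\<in>X. card N)"
    using card_arrangements_of_full_cycle[OF N] X by (intro sum.cong) auto
  finally show ?thesis by simp
qed

lemma card_full_cycles:
  assumes "finite N" "card N \<ge> 2"
  shows "card N * card (full_cycles N) = fact (card N)"
proof -
  have "{xs \<in> permutations_of_set N. cycle_of_list xs \<in> full_cycles N} = permutations_of_set N"
    using arrangement_full_cycle by blast
  then show ?thesis using card_arrangements_of_full_cycles[OF assms order_refl] assms(1) by simp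
qed

(* For a fixed arrangement xs of N, relabelling t |-> map t xs is a bijection between the
   permutations of N and the arrangements of N (injective, and both sets have |N|! elements). *)
lemma relabelling_bij:
  assumes N: "finite N" and xs: "xs \<in> permutations_of_set N"
  shows "bij_betw (\<lambda>t. map t xs) {t. t permutes N} (permutations_of_set N)"
proof -
  have xs_props: "distinct xs" "set xs = N" using xs by (auto dest: permutations_of_setD)
  have into: "map t xs \<in> permutations_of_set N" if "t permutes N" for t
    using xs_props permutes_inj[OF that] permutes_image[OF that]
    by (intro permutations_of_setI) (auto simp: distinct_map inj_on_def inj_def)
  have inj: "inj_on (\<lambda>t. map t xs) {t. t permutes N}"
  proof (rule inj_onI)
    fix t t' assume t: "t \<in> {t. t permutes N}" and t': "t' \<in> {t. t permutes N}"
      and same: "map t xs = map t' xs"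
    show "t = t'"
    proof
      fix x show "t x = t' x"
        using same xs_props t t' by (cases "x \<in> N") (auto simp: map_eq_conv permutes_not_in)
    qed
  qed
  have "card ((\<lambda>t. map t xs) ` {t. t permutes N}) = card (permutations_of_set N)"
    using card_image[OF inj] card_permutations[OF refl N] N by simp
  then have "(\<lambda>t. map t xs) ` {t. t permutes N} = permutations_of_set N"
    using into by (intro card_subset_eq) auto
  then show ?thesis using inj by (simp add: bij_betw_def)
qed

(* For a fixed full cycle s, exactly |N| * C(|N|, 3) permutations t make [s, t] a 3-cycle:
   relabel t by map t xs, group the arrangements by their cycle u = t s t^-1, and count the
   admissible u with card_three_cycle_quotients. *)
lemma card_three_cycle_commutators:
  assumes N: "finite N" "card N > 2" and s: "s \<in> full_cycles N"
  shows "card {t. t permutes N \<and> is_k_cycle 3 (commutator s t)} = card N * (card N choose 3)"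
proof -
  define n where "n = card N"
  obtain xs where xs: "distinct xs" "set xs = N" "s = cycle_of_list xs"
    using full_cycle_list[of N s] s N unfolding full_cycles_def by auto
  have xs_arr: "xs \<in> permutations_of_set N" using xs by (auto intro: permutations_of_setI)
  have xs_length: "length xs = n" unfolding n_def using xs by (metis distinct_card)
  define U where "U = {u. u permutes N \<and> is_k_cycle n u \<and> is_k_cycle 3 (s \<circ> inv u)}"
  have "{t. t permutes N \<and> is_k_cycle 3 (commutator s t)}
        = {t \<in> {t. t permutes N}. is_k_cycle 3 (s \<circ> inv (cycle_of_list (map t xs)))}"
    using commutator_cycle_of_list[OF xs(1)] xs(3) by (auto simp: permutes_bij)
  also have "card \<dots> = card {ys \<in> permutations_of_set N. is_k_cycle 3 (s \<circ> inv (cycle_of_list ys))}"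
    by (rule bij_betw_card_filter[OF relabelling_bij[OF N(1) xs_arr]])
  also have "{ys \<in> permutations_of_set N. is_k_cycle 3 (s \<circ> inv (cycle_of_list ys))}
             = {ys \<in> permutations_of_set N. cycle_of_list ys \<in> U}"
    using arrangement_full_cycle unfolding U_def full_cycles_def n_def by blast
  also have "card \<dots> = n * card U"
    using card_arrangements_of_full_cycles[OF N(1), of U] N(2)
    unfolding U_def full_cycles_def n_def by auto
  also have "card U = n choose 3"
    using card_three_cycle_quotients[OF xs(1) xs_length] unfolding U_def xs(2,3) .
  finally show ?thesis unfolding n_def .
qed

lemma card_three_cycle_commutator_pairs:
  assumes "finite N" "card N > 2"
  shows "card {(s, t). s permutes N \<and> t permutes N \<and> is_k_cycle 3 (commutator s t) \<and> is_k_cycle (card N) s}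
         = (card N choose 3) * fact (card N)"
proof -
  define T where "T s = {t. t permutes N \<and> is_k_cycle 3 (commutator s t)}" for s
  have "{(s, t). s permutes N \<and> t permutes N \<and> is_k_cycle 3 (commutator s t) \<and> is_k_cycle (card N) s}
        = Sigma (full_cycles N) T"
    unfolding T_def full_cycles_def by auto
  also have "card \<dots> = (\<Sum>s\<in>full_cycles N. card (T s))"
    using assms(1) finite_full_cycles unfolding T_def by (intro card_SigmaI) (auto simp: finite_permutations)
  also have "\<dots> = card (full_cycles N) * (card N * (card N choose 3))"
    using card_three_cycle_commutators[OF assms] unfolding T_def by simp
  also have "\<dots> = (card N choose 3) * fact (card N)"
    using card_full_cycles[OF assms(1)] assms(2) by (simp add: algebra_simps)
  finally show ?thesis .
qed

theorem mainTheorem2: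
  fixes n :: nat
  assumes "n > 2"
  shows "card {(s, t). s permutes {1..n} \<and> t permutes {1..n} \<and>
                 is_k_cycle 3 (commutator s t) \<and> is_k_cycle n s}
         = (n choose 3) * fact n"
  using card_three_cycle_commutator_pairs[of "{1..n}"] assms by simp

end
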